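(* Let $k>l\ge0$ be integers, $\xi\in\mathbb{C}$, and $f:\mathbb{N}\to[0,\infty)$. Assume there exist $\kappa>0$ and $N\in\mathbb{N}$ such that $f(n)\ge\kappa|\xi|\beta^{kl}_n$ for all $n\ge N$. Then for all $\psi\in\mathcal{D}_0$, $$\|\xi(a^\dagger)^ka^l\psi+\xi^*(a^\dagger)^la^k\psi\|\le\frac{2}{\kappa}\|f(a^\dagger a)\psi\|+2|\xi|\beta^{kl}_{N-1}\|\psi\|.$$
   Context: $\mathbb{N}=\{0,1,2,\dots\}$. $\mathcal{H}$ is a separable complex Hilbert space with orthonormal basis $(\phi_n)_{n\in\mathbb{N}}$; $\mathcal{D}_0$ is the set of finite linear combinations of the $\phi_n$. The operators $a,a^\dagger$ have domain $\mathcal{D}_0$ and act by $a\phi_n=\sqrt{n}\,\phi_{n-1}$ ($a\phi_0=0$), $a^\dagger\phi_n=\sqrt{n+1}\,\phi_{n+1}$, extended linearly. $f(a^\dagger a)$ has domain $\mathcal{D}_0$ and $f(a^\dagger a)\phi_n=f(n)\phi_n$. For integers $x$ and $s\ge0$, $(x,s)=x(x+1)\cdots(x+s-1)$ ($=1$ if $s=0$), with the convention $(x,s)=0$ whenever $x$ is a negative integer; for integers $n$ and $k,l\ge0$, $\beta^{kl}_n=\sqrt{(n-l+1,l)(n-l+1,k)}$. *)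

theory Defs
  imports "HOL-Analysis.Analysis"
begin

text \<open>The Hilbert space H with orthonormal basis (phi_n) is represented by coordinates:
 a vector psi in D_0 is its finitely supported coefficient sequence c (psi = sum c n phi_n).\<close>

definition fin_supp :: "(nat \<Rightarrow> complex) \<Rightarrow> bool" where
  "fin_supp c \<longleftrightarrow> finite {n. c n \<noteq> 0}"

definition lnorm :: "(nat \<Rightarrow> complex) \<Rightarrow> real" where
  "lnorm c = sqrt (\<Sum>n\<in>{n. c n \<noteq> 0}. (cmod (c n))\<^sup>2)"

text \<open>annihilation: a phi_n = sqrt n phi_(n-1); coefficient of phi_n in a psi is sqrt(n+1) c(n+1)\<close>
definition ann :: "(nat \<Rightarrow> complex) \<Rightarrow> (nat \<Rightarrow> complex)" where
  "ann c = (\<lambda>n. complex_of_real (sqrt (real (n + 1))) * c (n + 1))"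

text \<open>creation: a^dagger phi_n = sqrt(n+1) phi_(n+1)\<close>
definition cre :: "(nat \<Rightarrow> complex) \<Rightarrow> (nat \<Rightarrow> complex)" where
  "cre c = (\<lambda>n. if n = 0 then 0 else complex_of_real (sqrt (real n)) * c (n - 1))"

text \<open>f(a^dagger a) phi_n = f(n) phi_n\<close>
definition fnum :: "(nat \<Rightarrow> real) \<Rightarrow> (nat \<Rightarrow> complex) \<Rightarrow> (nat \<Rightarrow> complex)" where
  "fnum f c = (\<lambda>n. complex_of_real (f n) * c n)"

definition rpoch :: "int \<Rightarrow> nat \<Rightarrow> real" where
  "rpoch x s = (if x < 0 then 0 else (\<Prod>i<s. real_of_int (x + int i)))"

definition beta :: "nat \<Rightarrow> nat \<Rightarrow> int \<Rightarrow> real" where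
  "beta k l n = sqrt (rpoch (n - int l + 1) l * rpoch (n - int l + 1) k)"

end

theory Submission
  imports Defs
begin

text \<open>In the basis \<open>(\<phi>\<^sub>n)\<close> both terms are weighted shifts with the same weights \<open>\<beta>\<close>:
  \<open>(a\<^sup>\<dagger>)\<^sup>k a\<^sup>l\<close> sends \<open>\<phi>(m)\<close> to \<open>\<beta>(m) \<phi>(m + k - l)\<close>, and \<open>(a\<^sup>\<dagger>)\<^sup>l a\<^sup>k\<close> sends \<open>\<phi>(n + k - l)\<close> to
  \<open>\<beta>(n) \<phi>(n)\<close>. So the first term has the norm of \<open>\<xi> \<beta> \<psi>\<close>, and since \<open>\<beta>\<close> is monotone the second is
  dominated by it; the left-hand side is thus at most \<open>2 \<parallel>\<xi> \<beta> \<psi>\<parallel>\<close>. Finally the weight is split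
  at \<open>N\<close>: \<open>|\<xi>| \<beta>(m) \<le> f(m) / \<kappa>\<close> for \<open>m \<ge> N\<close>, and \<open>\<beta>(m) \<le> \<beta>(N - 1)\<close> for \<open>m < N\<close>.\<close>

lemma rpoch_Suc: "rpoch x (Suc s) = rpoch x s * of_int (x + int s)"
  by (simp add: rpoch_def)

lemma rpoch_eq_0: "x \<le> 0 \<Longrightarrow> 0 < x + int s \<Longrightarrow> rpoch x s = 0"
  unfolding rpoch_def by (force intro!: prod_zero bexI[of _ "nat (- x)"])

lemma rpoch_nonneg: "rpoch x s \<ge> 0"
  unfolding rpoch_def by (auto intro!: prod_nonneg)

lemma rpoch_mono: "x \<le> y \<Longrightarrow> rpoch x s \<le> rpoch y s"
  unfolding rpoch_def by (auto intro!: prod_nonneg prod_mono)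

lemma beta_nonneg: "beta k l x \<ge> 0"
  unfolding beta_def by (simp add: rpoch_nonneg)

lemma beta_mono: "x \<le> y \<Longrightarrow> beta k l x \<le> beta k l y"
  unfolding beta_def by (intro real_sqrt_le_mono mult_mono rpoch_mono rpoch_nonneg) simp_all

lemma ann_pow:
  fixes c :: "nat \<Rightarrow> complex"
  shows "(ann ^^ j) c n = of_real (sqrt (rpoch (int n + 1) j)) * c (n + j)"
proof (induction j arbitrary: c)
  case 0
  then show ?case by (simp add: rpoch_def)
next
  case (Suc j)
  have "(ann ^^ Suc j) c n = (ann ^^ j) (ann c) n"
    by (simp only: funpow_Suc_right comp_def)
  also have "\<dots> = sqrt (rpoch (int n + 1) j) * sqrt (real (n + j + 1)) * c (n + Suc j)"
    by (simp add: Suc.IH ann_def)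
  also have "\<dots> = sqrt (rpoch (int n + 1) (Suc j)) * c (n + Suc j)"
    by (simp add: rpoch_Suc real_sqrt_mult add_ac)
  finally show ?case .
qed

text \<open>For \<open>n < j\<close> the weight vanishes by the convention \<open>(x,s) = 0\<close> for negative \<open>x\<close>,
  so the truncated index \<open>n - j\<close> is harmless.\<close>

lemma cre_pow:
  fixes c :: "nat \<Rightarrow> complex"
  shows "(cre ^^ j) c n = of_real (sqrt (rpoch (int n - int j + 1) j)) * c (n - j)"
proof (induction j arbitrary: n)
  case 0
  then show ?case by (simp add: rpoch_def)
next
  case (Suc j)
  show ?case
  proof (cases n)
    case 0
    then show ?thesis by (simp add: cre_def rpoch_eq_0)
  next
    case (Suc m)
    have "(cre ^^ Suc j) c n = sqrt (real n) * (cre ^^ j) c m"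
      by (simp add: cre_def Suc)
    also have "\<dots> = sqrt (rpoch (int m - int j + 1) j) * sqrt (real n) * c (m - j)"
      by (simp add: Suc.IH)
    also have "\<dots> = sqrt (rpoch (int n - int (Suc j) + 1) (Suc j)) * c (n - Suc j)"
      by (simp add: Suc rpoch_Suc real_sqrt_mult)
    finally show ?thesis .
  qed
qed

lemma cre_pow_eq_0: "n < j \<Longrightarrow> (cre ^^ j) c n = 0"
  by (simp add: cre_pow rpoch_eq_0)

lemma cre_pow_ann_pow_raising:
  fixes c :: "nat \<Rightarrow> complex"
  assumes "l \<le> k"
  shows "(cre ^^ k) ((ann ^^ l) c) (m + (k - l)) = of_real (beta k l (int m)) * c m"
proof (cases "m < l")
  case True
  then have "rpoch (int (m + (k - l)) - int k + 1) k = 0"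
    using assms by (intro rpoch_eq_0) auto
  moreover have "rpoch (int m - int l + 1) k = 0"
    using True assms by (intro rpoch_eq_0) auto
  ultimately show ?thesis
    by (simp add: cre_pow beta_def)
next
  case False
  then have "int (m + (k - l)) - int k + 1 = int m - int l + 1"
    "int (m + (k - l) - k) + 1 = int m - int l + 1" "m + (k - l) - k + l = m"
    using assms by auto
  then show ?thesis
    by (simp add: cre_pow ann_pow beta_def real_sqrt_mult mult_ac)
qed

lemma cre_pow_ann_pow_lowering:
  fixes c :: "nat \<Rightarrow> complex"
  assumes "l \<le> k"
  shows "(cre ^^ l) ((ann ^^ k) c) n = of_real (beta k l (int n)) * c (n + (k - l))"
proof (cases "n < l")
  case True
  then have "rpoch (int n - int l + 1) l = 0"
    by (intro rpoch_eq_0) auto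
  then show ?thesis
    by (simp add: cre_pow beta_def)
next
  case False
  then have "int (n - l) + 1 = int n - int l + 1" "n - l + k = n + (k - l)"
    using assms by auto
  then show ?thesis
    unfolding cre_pow ann_pow beta_def by (simp only: real_sqrt_mult of_real_mult mult_ac)
qed

lemma fin_supp_subset: "fin_supp d \<Longrightarrow> (\<And>n. d n = 0 \<Longrightarrow> c n = 0) \<Longrightarrow> fin_supp c"
  unfolding fin_supp_def by (rule finite_subset[rotated]) auto

lemma fin_supp_ann: "fin_supp c \<Longrightarrow> fin_supp (ann c)"
  unfolding fin_supp_def
  by (rule finite_subset[of _ "(\<lambda>n. n - 1) ` {n. c n \<noteq> 0}"])
    (auto simp: ann_def intro: rev_image_eqI[of "Suc _"])

lemma fin_supp_cre: "fin_supp c \<Longrightarrow> fin_supp (cre c)"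
  unfolding fin_supp_def
  by (rule finite_subset[of _ "Suc ` {n. c n \<noteq> 0}"])
    (auto simp: cre_def intro: rev_image_eqI[of "_ - 1"])

lemma fin_supp_funpow:
  assumes "\<And>c. fin_supp c \<Longrightarrow> fin_supp (A c)"
  shows "fin_supp c \<Longrightarrow> fin_supp ((A ^^ j) c)"
  by (induction j) (simp_all add: assms)

lemma fin_supp_shift_left: "fin_supp c \<Longrightarrow> fin_supp (\<lambda>n. c (n + d))"
  unfolding fin_supp_def using finite_vimageI[of "{n. c n \<noteq> 0}" "\<lambda>n. n + d"]
  by (simp add: vimage_def inj_on_def)

lemma lnorm_eq_L2_set:
  "finite S \<Longrightarrow> {n. c n \<noteq> 0} \<subseteq> S \<Longrightarrow> lnorm c = L2_set (\<lambda>n. cmod (c n)) S"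
  unfolding lnorm_def L2_set_def
  by (intro arg_cong[where f=sqrt] sum.mono_neutral_left) auto

lemma lnorm_mono:
  assumes "fin_supp d" "\<And>n. cmod (c n) \<le> cmod (d n)"
  shows "lnorm c \<le> lnorm d"
proof -
  have "c n = 0" if "d n = 0" for n
    using assms(2)[of n] that by simp
  then have "{n. c n \<noteq> 0} \<subseteq> {n. d n \<noteq> 0}"
    by blast
  then have "lnorm c = L2_set (\<lambda>n. cmod (c n)) {n. d n \<noteq> 0}"
    using assms(1) unfolding fin_supp_def by (rule lnorm_eq_L2_set[rotated])
  also have "\<dots> \<le> L2_set (\<lambda>n. cmod (d n)) {n. d n \<noteq> 0}"
    using assms(2) by (rule L2_set_mono) simp
  also have "\<dots> = lnorm d"
    using assms(1) unfolding fin_supp_def by (rule lnorm_eq_L2_set[symmetric]) simp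
  finally show ?thesis .
qed

lemma lnorm_add_le:
  assumes "fin_supp c" "fin_supp d"
  shows "lnorm (\<lambda>n. c n + d n) \<le> lnorm c + lnorm d"
proof -
  define S where "S = {n. c n \<noteq> 0} \<union> {n. d n \<noteq> 0}"
  have S: "finite S" using assms by (simp add: S_def fin_supp_def)
  have lnorm_c: "lnorm c = L2_set (\<lambda>n. cmod (c n)) S"
    by (rule lnorm_eq_L2_set[OF S]) (auto simp: S_def)
  have lnorm_d: "lnorm d = L2_set (\<lambda>n. cmod (d n)) S"
    by (rule lnorm_eq_L2_set[OF S]) (auto simp: S_def)
  have "lnorm (\<lambda>n. c n + d n) = L2_set (\<lambda>n. cmod (c n + d n)) S"
    using S by (intro lnorm_eq_L2_set) (auto simp: S_def)
  also have "\<dots> \<le> L2_set (\<lambda>n. cmod (c n) + cmod (d n)) S"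
    by (intro L2_set_mono norm_triangle_ineq) simp
  also have "\<dots> \<le> L2_set (\<lambda>n. cmod (c n)) S + L2_set (\<lambda>n. cmod (d n)) S"
    by (rule L2_set_triangle_ineq)
  also have "\<dots> = lnorm c + lnorm d"
    by (simp only: lnorm_c lnorm_d)
  finally show ?thesis .
qed

lemma lnorm_scale: "lnorm (\<lambda>n. a * c n) = cmod a * lnorm c"
proof (cases "a = 0")
  case True
  then show ?thesis by (simp add: lnorm_def)
next
  case False
  then show ?thesis
    by (simp add: lnorm_def norm_mult power_mult_distrib real_sqrt_mult flip: sum_distrib_left)
qed

lemma lnorm_shift_right: "lnorm (\<lambda>n. if n < d then 0 else c (n - d)) = lnorm c"
proof -
  have "{n. (if n < d then 0 else c (n - d)) \<noteq> 0} = (\<lambda>m. m + d) ` {m. c m \<noteq> 0}"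
    by (auto simp: image_iff intro!: exI[of _ "_ - d"])
  then show ?thesis
    by (simp add: lnorm_def sum.reindex)
qed

lemma lnorm_shift_left_le:
  assumes "fin_supp c"
  shows "lnorm (\<lambda>n. c (n + d)) \<le> lnorm c"
proof -
  have "(\<Sum>n\<in>{n. c (n + d) \<noteq> 0}. (cmod (c (n + d)))\<^sup>2)
      = (\<Sum>m\<in>(\<lambda>n. n + d) ` {n. c (n + d) \<noteq> 0}. (cmod (c m))\<^sup>2)"
    by (simp add: sum.reindex)
  also have "\<dots> \<le> (\<Sum>m\<in>{m. c m \<noteq> 0}. (cmod (c m))\<^sup>2)"
    using assms unfolding fin_supp_def by (intro sum_mono2) auto
  finally show ?thesis
    unfolding lnorm_def by (rule real_sqrt_le_mono)
qed

lemma lnorm_cre_ann_sum_le: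
  fixes \<psi> :: "nat \<Rightarrow> complex"
  assumes "l \<le> k" "fin_supp \<psi>"
  shows "lnorm (\<lambda>n. \<xi> * (cre ^^ k) ((ann ^^ l) \<psi>) n + cnj \<xi> * (cre ^^ l) ((ann ^^ k) \<psi>) n)
    \<le> 2 * lnorm (\<lambda>m. \<xi> * of_real (beta k l (int m)) * \<psi> m)"
proof -
  define d where "d = k - l"
  define G where "G = (\<lambda>m. \<xi> * of_real (beta k l (int m)) * \<psi> m)"
  define raise where "raise = (\<lambda>n. \<xi> * (cre ^^ k) ((ann ^^ l) \<psi>) n)"
  define lower where "lower = (\<lambda>n. cnj \<xi> * (cre ^^ l) ((ann ^^ k) \<psi>) n)"
  have fin_supp_pow: "fin_supp ((cre ^^ i) ((ann ^^ j) \<psi>))" for i j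
    using assms(2) by (intro fin_supp_funpow fin_supp_ann fin_supp_cre)
  have "fin_supp raise"
    unfolding raise_def by (rule fin_supp_subset[OF fin_supp_pow[of k l]]) simp
  have "fin_supp lower"
    unfolding lower_def by (rule fin_supp_subset[OF fin_supp_pow[of l k]]) simp
  have "fin_supp G"
    unfolding G_def by (rule fin_supp_subset[OF assms(2)]) simp
  have "raise = (\<lambda>n. if n < d then 0 else G (n - d))"
  proof
    fix n
    show "raise n = (if n < d then 0 else G (n - d))"
      using cre_pow_ann_pow_raising[OF assms(1), of \<psi> "n - d"]
      by (auto simp: raise_def G_def d_def cre_pow_eq_0)
  qed
  then have "lnorm raise = lnorm G"
    by (simp add: lnorm_shift_right)
  have "lnorm lower \<le> lnorm (\<lambda>n. G (n + d))"
  proof (rule lnorm_mono)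
    show "fin_supp (\<lambda>n. G (n + d))"
      using \<open>fin_supp G\<close> by (rule fin_supp_shift_left)
    fix n
    have "cmod (lower n) = cmod \<xi> * beta k l (int n) * cmod (\<psi> (n + d))"
      by (simp add: lower_def d_def cre_pow_ann_pow_lowering[OF assms(1)] norm_mult beta_nonneg)
    also have "\<dots> \<le> cmod \<xi> * beta k l (int (n + d)) * cmod (\<psi> (n + d))"
      by (intro mult_right_mono mult_left_mono beta_mono) simp_all
    also have "\<dots> = cmod (G (n + d))"
      by (simp add: G_def norm_mult beta_nonneg)
    finally show "cmod (lower n) \<le> cmod (G (n + d))" .
  qed
  also have "\<dots> \<le> lnorm G"
    using \<open>fin_supp G\<close> by (rule lnorm_shift_left_le)
  finally have "lnorm lower \<le> lnorm G" .
  moreover have "lnorm (\<lambda>n. raise n + lower n) \<le> lnorm raise + lnorm lower"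
    using \<open>fin_supp raise\<close> \<open>fin_supp lower\<close> by (rule lnorm_add_le)
  ultimately show ?thesis
    using \<open>lnorm raise = lnorm G\<close> by (simp add: raise_def lower_def G_def)
qed

lemma lnorm_beta_weighted_le:
  fixes \<psi> :: "nat \<Rightarrow> complex"
  assumes "\<forall>n. f n \<ge> 0" "\<kappa> > 0" "\<forall>n\<ge>N. f n \<ge> \<kappa> * cmod \<xi> * beta k l (int n)" "fin_supp \<psi>"
  shows "lnorm (\<lambda>m. \<xi> * of_real (beta k l (int m)) * \<psi> m)
    \<le> lnorm (fnum f \<psi>) / \<kappa> + cmod \<xi> * beta k l (int N - 1) * lnorm \<psi>"
proof -
  define \<beta>\<^sub>0 where "\<beta>\<^sub>0 = beta k l (int N - 1)"
  have "\<beta>\<^sub>0 \<ge> 0"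
    by (simp add: \<beta>\<^sub>0_def beta_nonneg)
  have weight: "cmod \<xi> * beta k l (int m) \<le> f m / \<kappa> + cmod \<xi> * \<beta>\<^sub>0" for m
  proof (cases "N \<le> m")
    case True
    then have "cmod \<xi> * beta k l (int m) \<le> f m / \<kappa>"
      using assms(2,3) by (simp add: field_simps)
    then show ?thesis
      using \<open>\<beta>\<^sub>0 \<ge> 0\<close> by (simp add: add_increasing2)
  next
    case False
    then have "beta k l (int m) \<le> \<beta>\<^sub>0"
      unfolding \<beta>\<^sub>0_def by (intro beta_mono) simp
    then show ?thesis
      using assms(1,2) by (simp add: add_increasing mult_left_mono)
  qed
  define g where "g = (\<lambda>m. of_real (1 / \<kappa>) * fnum f \<psi> m)"
  define h where "h = (\<lambda>m. of_real (cmod \<xi> * \<beta>\<^sub>0) * \<psi> m)"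
  have "fin_supp g" "fin_supp h"
    unfolding g_def h_def fnum_def by (rule fin_supp_subset[OF assms(4)]; simp)+
  have "lnorm (\<lambda>m. \<xi> * of_real (beta k l (int m)) * \<psi> m) \<le> lnorm (\<lambda>m. g m + h m)"
  proof (rule lnorm_mono)
    show "fin_supp (\<lambda>m. g m + h m)"
      by (rule fin_supp_subset[OF assms(4)]) (simp add: g_def h_def fnum_def)
    fix m
    have "g m + h m = of_real (f m / \<kappa> + cmod \<xi> * \<beta>\<^sub>0) * \<psi> m"
      by (simp add: g_def h_def fnum_def algebra_simps)
    moreover have "f m / \<kappa> + cmod \<xi> * \<beta>\<^sub>0 \<ge> 0"
      using assms(1,2) \<open>\<beta>\<^sub>0 \<ge> 0\<close> by simp
    ultimately have "cmod (g m + h m) = (f m / \<kappa> + cmod \<xi> * \<beta>\<^sub>0) * cmod (\<psi> m)"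
      by (simp only: norm_mult norm_of_real abs_of_nonneg)
    then show "cmod (\<xi> * of_real (beta k l (int m)) * \<psi> m) \<le> cmod (g m + h m)"
      using weight[of m] by (simp add: norm_mult beta_nonneg mult_right_mono)
  qed
  also have "\<dots> \<le> lnorm g + lnorm h"
    using \<open>fin_supp g\<close> \<open>fin_supp h\<close> by (rule lnorm_add_le)
  also have "\<dots> = lnorm (fnum f \<psi>) / \<kappa> + cmod \<xi> * \<beta>\<^sub>0 * lnorm \<psi>"
    unfolding g_def h_def lnorm_scale norm_of_real
    using assms(2) \<open>\<beta>\<^sub>0 \<ge> 0\<close> by simp
  finally show ?thesis
    unfolding \<beta>\<^sub>0_def .
qed

theorem lemma3p4:
  fixes k l N :: nat and \<xi> :: complex and f :: "nat \<Rightarrow> real" and \<kappa> :: real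
    and \<psi> :: "nat \<Rightarrow> complex"
  assumes "l < k"
    and "\<forall>n. f n \<ge> 0"
    and "\<kappa> > 0"
    and "\<forall>n\<ge>N. f n \<ge> \<kappa> * cmod \<xi> * beta k l (int n)"
    and "fin_supp \<psi>"
  shows "lnorm (\<lambda>n. \<xi> * (cre ^^ k) ((ann ^^ l) \<psi>) n + cnj \<xi> * (cre ^^ l) ((ann ^^ k) \<psi>) n)
         \<le> 2 / \<kappa> * lnorm (fnum f \<psi>) + 2 * cmod \<xi> * beta k l (int N - 1) * lnorm \<psi>"
proof -
  have "lnorm (\<lambda>n. \<xi> * (cre ^^ k) ((ann ^^ l) \<psi>) n + cnj \<xi> * (cre ^^ l) ((ann ^^ k) \<psi>) n)
      \<le> 2 * lnorm (\<lambda>m. \<xi> * of_real (beta k l (int m)) * \<psi> m)"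
    using assms(1,5) by (intro lnorm_cre_ann_sum_le) simp_all
  also have "\<dots> \<le> 2 * (lnorm (fnum f \<psi>) / \<kappa> + cmod \<xi> * beta k l (int N - 1) * lnorm \<psi>)"
    using lnorm_beta_weighted_le[OF assms(2-5)] by simp
  finally show ?thesis
    by (simp add: algebra_simps)
qed

end
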